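(* Let $G$ and $H$ be finite graphs such that $\Delta(G)<n(H)$ and $\gamma(H)=1$. Then $\Gamma_{\rm S}(G,H)=\gamma_{\rm S}(G,H)=n(G)$.
   Context: All graphs are finite and simple; $\Delta(G)$ is the maximum degree of $G$, $n(X)=|V(X)|$, and $\gamma(X)$ is the domination number. For graphs $G,H$ and a function $f\colon V(G)\to V(H)$, the Sierpiński product $G\otimes_f H$ is the graph with vertex set $V(G)\times V(H)$ and edges of two types: (type 1) $(g,h)(g,h')$ for every $g\in V(G)$ and every edge $hh'\in E(H)$; (type 2) $(g,f(g'))(g',f(g))$ for every edge $gg'\in E(G)$. $\gamma_{\rm S}(G,H)=\min_{f}\gamma(G\otimes_f H)$ and $\Gamma_{\rm S}(G,H)=\max_{f}\gamma(G\otimes_f H)$, over all functions $f\colon V(G)\to V(H)$. *)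

theory Defs
  imports Main
begin

definition fin_graph :: "'a set \<Rightarrow> ('a \<Rightarrow> 'a \<Rightarrow> bool) \<Rightarrow> bool" where
  "fin_graph V E \<longleftrightarrow> finite V \<and> (\<forall>x y. E x y \<longrightarrow> x \<in> V \<and> y \<in> V)
     \<and> (\<forall>x y. E x y \<longrightarrow> E y x) \<and> (\<forall>x. \<not> E x x)"

definition degree :: "'a set \<Rightarrow> ('a \<Rightarrow> 'a \<Rightarrow> bool) \<Rightarrow> 'a \<Rightarrow> nat" where
  "degree V E x = card {y \<in> V. E x y}"

definition max_degree :: "'a set \<Rightarrow> ('a \<Rightarrow> 'a \<Rightarrow> bool) \<Rightarrow> nat" where
  "max_degree V E = Max (insert 0 (degree V E ` V))"

definition dominating :: "'a set \<Rightarrow> ('a \<Rightarrow> 'a \<Rightarrow> bool) \<Rightarrow> 'a set \<Rightarrow> bool" where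
  "dominating V E D \<longleftrightarrow> D \<subseteq> V \<and> (\<forall>v\<in>V. v \<in> D \<or> (\<exists>u\<in>D. E u v))"

definition domination_number :: "'a set \<Rightarrow> ('a \<Rightarrow> 'a \<Rightarrow> bool) \<Rightarrow> nat" where
  "domination_number V E = Min {card D | D. dominating V E D}"

definition sierp_adj :: "('a \<Rightarrow> 'a \<Rightarrow> bool) \<Rightarrow> ('b \<Rightarrow> 'b \<Rightarrow> bool) \<Rightarrow> ('a \<Rightarrow> 'b)
    \<Rightarrow> 'a \<times> 'b \<Rightarrow> 'a \<times> 'b \<Rightarrow> bool" where
  "sierp_adj EG EH f p q \<longleftrightarrow>
     (fst p = fst q \<and> EH (snd p) (snd q))
   \<or> (EG (fst p) (fst q) \<and> snd p = f (fst q) \<and> snd q = f (fst p))"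

definition sierp_dom :: "'a set \<Rightarrow> ('a \<Rightarrow> 'a \<Rightarrow> bool) \<Rightarrow> 'b set \<Rightarrow> ('b \<Rightarrow> 'b \<Rightarrow> bool)
    \<Rightarrow> ('a \<Rightarrow> 'b) \<Rightarrow> nat" where
  "sierp_dom VG EG VH EH f = domination_number (VG \<times> VH) (sierp_adj EG EH f)"

definition gamma_S :: "'a set \<Rightarrow> ('a \<Rightarrow> 'a \<Rightarrow> bool) \<Rightarrow> 'b set \<Rightarrow> ('b \<Rightarrow> 'b \<Rightarrow> bool) \<Rightarrow> nat" where
  "gamma_S VG EG VH EH = Min {sierp_dom VG EG VH EH f | f. \<forall>g\<in>VG. f g \<in> VH}"

definition Gamma_S :: "'a set \<Rightarrow> ('a \<Rightarrow> 'a \<Rightarrow> bool) \<Rightarrow> 'b set \<Rightarrow> ('b \<Rightarrow> 'b \<Rightarrow> bool) \<Rightarrow> nat" where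
  "Gamma_S VG EG VH EH = Max {sierp_dom VG EG VH EH f | f. \<forall>g\<in>VG. f g \<in> VH}"

end

theory Submission
  imports Defs
begin

text \<open>A universal vertex \<open>h\<^sub>0\<close> of \<open>H\<close> makes the layer \<open>V(G) \<times> {h\<^sub>0}\<close> dominating,
  so \<open>\<gamma>(G \<otimes>\<^sub>f H) \<le> n(G)\<close> for every \<open>f\<close>. Conversely, a vertex \<open>g\<close> has at most \<open>\<Delta>(G) < n(H)\<close>
  neighbours, so some \<open>(g, h)\<close> is not the endpoint of a type-2 edge; it can only be dominated
  from inside its own \<open>H\<close>-layer, hence every dominating set meets every layer and
  \<open>\<gamma>(G \<otimes>\<^sub>f H) \<ge> n(G)\<close>.\<close>

lemma finite_dominating_cards:
  assumes "finite V"
  shows "finite {card D | D. dominating V E D}"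
proof (rule finite_subset)
  show "{card D | D. dominating V E D} \<subseteq> card ` Pow V"
    by (auto simp: dominating_def)
qed (use assms in simp)

lemma dominating_self: "dominating V E V"
  by (simp add: dominating_def)

lemma domination_number_attained:
  assumes "finite V"
  obtains D where "dominating V E D" "card D = domination_number V E"
proof -
  have "domination_number V E \<in> {card D | D. dominating V E D}"
    unfolding domination_number_def
    using finite_dominating_cards[OF assms] dominating_self by (intro Min_in) auto
  with that show thesis by auto
qed

lemma domination_number_eqI:
  assumes "finite V" and "dominating V E D" and "card D = n"
    and "\<And>D'. dominating V E D' \<Longrightarrow> n \<le> card D'"
  shows "domination_number V E = n"
  unfolding domination_number_def
  using assms finite_dominating_cards[OF assms(1)] by (intro Min_eqI) auto

lemma domination_number_eq_1_imp_universal_vertex: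
  assumes "finite V" and "domination_number V E = 1"
  obtains h where "h \<in> V" "\<forall>v\<in>V. v = h \<or> E h v"
proof -
  obtain D where D: "dominating V E D" "card D = 1"
    using domination_number_attained[OF assms(1)] assms(2) by metis
  then obtain h where "D = {h}" by (auto simp: card_Suc_eq)
  with D(1) that show thesis by (auto simp: dominating_def)
qed

lemma degree_le_max_degree:
  assumes "finite V" and "x \<in> V"
  shows "degree V E x \<le> max_degree V E"
  unfolding max_degree_def using assms by (intro Max_ge) auto

lemma dominating_sierp_layer:
  assumes "h\<^sub>0 \<in> VH" and "\<forall>v\<in>VH. v = h\<^sub>0 \<or> EH h\<^sub>0 v"
  shows "dominating (VG \<times> VH) (sierp_adj EG EH f) (VG \<times> {h\<^sub>0})"
  using assms by (auto simp: dominating_def sierp_adj_def)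

lemma sierp_dominating_meets_layer:
  assumes G: "fin_graph VG EG"
    and D: "dominating (VG \<times> VH) (sierp_adj EG EH f) D"
    and g: "g \<in> VG" and h: "h \<in> VH" "h \<notin> f ` {g' \<in> VG. EG g g'}"
  shows "g \<in> fst ` D"
proof -
  have "(g, h) \<in> D \<or> (\<exists>u\<in>D. sierp_adj EG EH f u (g, h))"
    using D g h(1) by (auto simp: dominating_def)
  then consider "(g, h) \<in> D" | u where "u \<in> D" "sierp_adj EG EH f u (g, h)"
    by blast
  then show ?thesis
  proof cases
    case (2 u)
    have "fst u \<in> VG" using \<open>u \<in> D\<close> D by (auto simp: dominating_def)
    moreover have "fst u = g \<or> (EG (fst u) g \<and> h = f (fst u))"
      using 2(2) by (auto simp: sierp_adj_def)
    ultimately have "fst u = g"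
      using h(2) G by (auto simp: fin_graph_def)
    with \<open>u \<in> D\<close> show ?thesis by force
  qed force
qed

lemma exists_vertex_outside_neighbour_image:
  assumes "finite VG" and "g \<in> VG" and "max_degree VG EG < card VH"
  obtains h where "h \<in> VH" "h \<notin> f ` {g' \<in> VG. EG g g'}"
proof -
  let ?N = "{g' \<in> VG. EG g g'}"
  have "card (f ` ?N) \<le> degree VG EG g"
    unfolding degree_def using assms(1) by (simp add: card_image_le)
  also have "\<dots> < card VH"
    using degree_le_max_degree[OF assms(1,2), of EG] assms(3) by simp
  finally have "card (f ` ?N) < card VH" .
  moreover have "finite (f ` ?N)" using assms(1) by simp
  ultimately have "\<not> VH \<subseteq> f ` ?N"
    by (metis card_mono leD)
  with that show thesis by blast
qed

lemma card_le_sierp_dominating: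
  assumes G: "fin_graph VG EG" and "max_degree VG EG < card VH"
    and D: "dominating (VG \<times> VH) (sierp_adj EG EH f) D"
  shows "card VG \<le> card D"
proof -
  have fin: "finite VG" "finite VH"
    using G assms(2) card.infinite by (fastforce simp: fin_graph_def)+
  have fD: "finite D"
    using D fin by (metis dominating_def finite_SigmaI finite_subset)
  have "VG \<subseteq> fst ` D"
  proof
    fix g assume "g \<in> VG"
    then obtain h where "h \<in> VH" "h \<notin> f ` {g' \<in> VG. EG g g'}"
      using exists_vertex_outside_neighbour_image fin(1) assms(2) by metis
    with G D \<open>g \<in> VG\<close> show "g \<in> fst ` D" by (rule sierp_dominating_meets_layer)
  qed
  then have "card VG \<le> card (fst ` D)" using fD by (simp add: card_mono)
  also have "\<dots> \<le> card D" using fD by (rule card_image_le)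
  finally show ?thesis .
qed

lemma sierp_dom_eq_card:
  assumes "fin_graph VG EG" and "fin_graph VH EH"
    and "max_degree VG EG < card VH"
    and "h\<^sub>0 \<in> VH" and "\<forall>v\<in>VH. v = h\<^sub>0 \<or> EH h\<^sub>0 v"
  shows "sierp_dom VG EG VH EH f = card VG"
  unfolding sierp_dom_def
proof (rule domination_number_eqI)
  show "finite (VG \<times> VH)" using assms(1,2) by (simp add: fin_graph_def)
  show "dominating (VG \<times> VH) (sierp_adj EG EH f) (VG \<times> {h\<^sub>0})"
    using assms(4,5) by (rule dominating_sierp_layer)
  show "card (VG \<times> {h\<^sub>0}) = card VG" by (simp add: card_cartesian_product)
  show "card VG \<le> card D" if "dominating (VG \<times> VH) (sierp_adj EG EH f) D" for D
    using assms(1,3) that by (rule card_le_sierp_dominating)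
qed

theorem proposition2p3:
  fixes VG :: "'a set" and EG :: "'a \<Rightarrow> 'a \<Rightarrow> bool"
    and VH :: "'b set" and EH :: "'b \<Rightarrow> 'b \<Rightarrow> bool"
  assumes "fin_graph VG EG" and "fin_graph VH EH"
    and "max_degree VG EG < card VH"
    and "domination_number VH EH = 1"
  shows "Gamma_S VG EG VH EH = card VG \<and> gamma_S VG EG VH EH = card VG"
proof -
  have "finite VH" using assms(2) by (simp add: fin_graph_def)
  then obtain h\<^sub>0 where h\<^sub>0: "h\<^sub>0 \<in> VH" "\<forall>v\<in>VH. v = h\<^sub>0 \<or> EH h\<^sub>0 v"
    using assms(4) by (rule domination_number_eq_1_imp_universal_vertex)
  note sierp_dom_eq_card[OF assms(1-3) h\<^sub>0]
  then have "{sierp_dom VG EG VH EH f | f. \<forall>g\<in>VG. f g \<in> VH} = {card VG}"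
    using h\<^sub>0(1) by auto
  then show ?thesis unfolding Gamma_S_def gamma_S_def by simp
qed

end
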